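(* For every temporal oriented tree $\mathcal T$, the connectivity graph $G$ of $\mathcal T$ contains no even hole, i.e., no induced cycle of even length at least $6$.
   Context: A temporal digraph is a pair $(D,\lambda)$ with $D=(V,A)$ a finite digraph and $\lambda:A\to 2^{\{1,\dots,t_{\max}\}}$ giving the time-steps at which each arc is active. A temporal oriented tree $\mathcal T=(T,\lambda)$ is one whose underlying digraph $T$ is an orientation of a tree. A temporal path is a sequence $(v_1,v_2,t_1),\dots,(v_{k-1},v_k,t_{k-1})$ with pairwise distinct $v_i$, $\overrightarrow{v_iv_{i+1}}\in A$, $t_i\in\lambda(\overrightarrow{v_iv_{i+1}})$ and $t_1<\dots<t_{k-1}$. Two vertices $u\ne v$ are temporally connected if there is a temporal path from $u$ to $v$ or from $v$ to $u$. The connectivity graph of $\mathcal T$ is the undirected graph $G$ with $V(G)=V(T)$ and $uv\in E(G)$ iff $u\neq v$ and $u,v$ are temporally connected. *)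

theory Defs
  imports Main
begin

definition digraph :: "'a set \<Rightarrow> ('a \<times> 'a) set \<Rightarrow> bool" where
  "digraph V A \<longleftrightarrow> finite V \<and> A \<subseteq> V \<times> V"

definition und_adj :: "('a \<times> 'a) set \<Rightarrow> 'a \<Rightarrow> 'a \<Rightarrow> bool" where
  "und_adj A u v \<longleftrightarrow> (u, v) \<in> A \<or> (v, u) \<in> A"

definition is_cycle :: "('a \<Rightarrow> 'a \<Rightarrow> bool) \<Rightarrow> 'a set \<Rightarrow> 'a list \<Rightarrow> bool" where
  "is_cycle E V cs \<longleftrightarrow> length cs \<ge> 3 \<and> distinct cs \<and> set cs \<subseteq> V \<and>
     (\<forall>i < length cs. E (cs ! i) (cs ! ((i + 1) mod length cs)))"

definition is_induced_cycle :: "('a \<Rightarrow> 'a \<Rightarrow> bool) \<Rightarrow> 'a set \<Rightarrow> 'a list \<Rightarrow> bool" where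
  "is_induced_cycle E V cs \<longleftrightarrow> length cs \<ge> 3 \<and> distinct cs \<and> set cs \<subseteq> V \<and>
     (\<forall>i < length cs. \<forall>j < length cs.
        E (cs ! i) (cs ! j) \<longleftrightarrow> (j = (i + 1) mod length cs \<or> i = (j + 1) mod length cs))"

definition has_even_hole :: "('a \<Rightarrow> 'a \<Rightarrow> bool) \<Rightarrow> 'a set \<Rightarrow> bool" where
  "has_even_hole E V \<longleftrightarrow> (\<exists>cs. is_induced_cycle E V cs \<and> even (length cs) \<and> length cs \<ge> 6)"

definition oriented_tree :: "'a set \<Rightarrow> ('a \<times> 'a) set \<Rightarrow> bool" where
  "oriented_tree V A \<longleftrightarrow> digraph V A \<and>
     (\<forall>u v. (u, v) \<in> A \<longrightarrow> u \<noteq> v \<and> (v, u) \<notin> A) \<and>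
     (\<forall>u\<in>V. \<forall>v\<in>V. (u, v) \<in> {(x, y). und_adj A x y}\<^sup>*) \<and>
     \<not> (\<exists>cs. is_cycle (und_adj A) V cs)"

definition temporal_digraph :: "'a set \<Rightarrow> ('a \<times> 'a) set \<Rightarrow> nat \<Rightarrow> ('a \<times> 'a \<Rightarrow> nat set) \<Rightarrow> bool" where
  "temporal_digraph V A tmax lam \<longleftrightarrow> digraph V A \<and> (\<forall>a\<in>A. lam a \<subseteq> {1..tmax})"

definition temporal_path ::
  "('a \<times> 'a) set \<Rightarrow> ('a \<times> 'a \<Rightarrow> nat set) \<Rightarrow> 'a list \<Rightarrow> nat list \<Rightarrow> bool" where
  "temporal_path A lam vs ts \<longleftrightarrow> vs \<noteq> [] \<and> distinct vs \<and> length ts + 1 = length vs \<and>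
     (\<forall>i < length ts. (vs ! i, vs ! (i + 1)) \<in> A \<and> ts ! i \<in> lam (vs ! i, vs ! (i + 1))) \<and>
     sorted_wrt (<) ts"

definition temporally_reaches ::
  "('a \<times> 'a) set \<Rightarrow> ('a \<times> 'a \<Rightarrow> nat set) \<Rightarrow> 'a \<Rightarrow> 'a \<Rightarrow> bool" where
  "temporally_reaches A lam u w \<longleftrightarrow>
     (\<exists>vs ts. temporal_path A lam vs ts \<and> hd vs = u \<and> last vs = w)"

definition conn_graph ::
  "'a set \<Rightarrow> ('a \<times> 'a) set \<Rightarrow> ('a \<times> 'a \<Rightarrow> nat set) \<Rightarrow> 'a \<Rightarrow> 'a \<Rightarrow> bool" where
  "conn_graph V A lam u w \<longleftrightarrow> u \<in> V \<and> w \<in> V \<and> u \<noteq> w \<and>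
     (temporally_reaches A lam u w \<or> temporally_reaches A lam w u)"

end

theory Submission
  imports Defs "HOL-Library.Sublist" "HOL-Library.Transitive_Closure_Table"
begin

text \<open>Let \<open>c\<^sub>0, \<dots>, c\<^sub>k\<^sub>-\<^sub>1\<close> with \<open>k \<ge> 6\<close> be an induced cycle of the connectivity graph
  and let \<open>Q\<^sub>j\<close> be a temporal path joining \<open>c\<^sub>j\<close> and \<open>c\<^sub>j\<^sub>+\<^sub>1\<close>. A cycle vertex on \<open>Q\<^sub>j\<close> is
  temporally connected to both ends of \<open>Q\<^sub>j\<close>, so \<open>Q\<^sub>j\<close> meets the cycle only in its ends. If
  two temporal paths share a vertex \<open>m\<close>, the start of one reaches the end of the other: in a
  tree a directed path into \<open>m\<close> and one out of \<open>m\<close> meet only in \<open>m\<close>, so the halves can be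
  joined. Hence paths through a common vertex belong to touching edges of the cycle.

  Let \<open>m\<close> be the vertex where the tree paths from \<open>c\<^sub>1\<close> to \<open>c\<^sub>0\<close> and to \<open>c\<^sub>2\<close> diverge,
  continuing to \<open>b\<close> and \<open>a\<close>. The \<open>Q\<^sub>j\<close> form a closed walk and tree edges are bridges, so
  \<open>ma\<close> and \<open>mb\<close> are also used by paths \<open>Q\<^sub>j\<close>, \<open>Q\<^sub>j\<^sub>'\<close> with \<open>j, j' \<ge> 2\<close>, and \<open>j \<noteq> j'\<close>
  because a directed path cannot leave (or enter) \<open>m\<close> twice. Touching with \<open>Q\<^sub>0\<close> and
  \<open>Q\<^sub>1\<close> forces \<open>{j, j'} = {2, k - 1}\<close>, but \<open>Q\<^sub>2\<close> and \<open>Q\<^sub>k\<^sub>-\<^sub>1\<close> do not touch.\<close>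

section \<open>Walks and bridges in oriented trees\<close>

lemma successively_rtranclp:
  "successively R xs \<Longrightarrow> xs \<noteq> [] \<Longrightarrow> R\<^sup>*\<^sup>* (hd xs) (last xs)"
  by (induction R xs rule: successively.induct) (auto intro: converse_rtranclp_into_rtranclp)

lemma successively_if_rtrancl_path:
  "rtrancl_path R x p y \<Longrightarrow> successively R (x # p) \<and> last (x # p) = y"
  by (induction rule: rtrancl_path.induct) auto

lemma not_successively_split:
  "\<not> successively R xs \<Longrightarrow> \<exists>ys u v zs. xs = ys @ u # v # zs \<and> \<not> R u v"
proof (induction R xs rule: successively.induct)
  case (3 R x y xs)
  then show ?case by (metis append_Cons append_Nil successively.simps(3))
qed simp_all

lemma distinct_split_unique:
  "distinct (xs @ m # ys) \<Longrightarrow> xs @ m # ys = xs' @ m # ys' \<Longrightarrow> xs = xs' \<and> ys = ys'"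
  by (metis append_Cons_eq_iff distinct.simps(2) distinct_append not_distinct_conv_prefix)

lemma is_cycle_intro:
  assumes "3 \<le> length cs" "distinct cs" "set cs \<subseteq> V" "successively E cs" "E (last cs) (hd cs)"
  shows "is_cycle E V cs"
  unfolding is_cycle_def
proof (intro conjI allI impI)
  fix i assume i: "i < length cs"
  show "E (cs ! i) (cs ! ((i + 1) mod length cs))"
  proof (cases "Suc i < length cs")
    case True
    then show ?thesis using successively_nth[OF assms(4)] by simp
  next
    case False
    then have "i = length cs - 1" "Suc i = length cs" "cs \<noteq> []" using i by auto
    then show ?thesis using assms(5) by (simp add: last_conv_nth hd_conv_nth)
  qed
qed (use assms in auto)

definition und_adj_without :: "('a \<times> 'a) set \<Rightarrow> 'a \<Rightarrow> 'a \<Rightarrow> 'a \<Rightarrow> 'a \<Rightarrow> bool" where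
  "und_adj_without A x y u v \<longleftrightarrow> und_adj A u v \<and> {u, v} \<noteq> {x, y}"

definition traverses :: "'a list \<Rightarrow> 'a \<Rightarrow> 'a \<Rightarrow> bool" where
  "traverses xs x y \<longleftrightarrow> (\<exists>ys zs. xs = ys @ x # y # zs \<or> xs = ys @ y # x # zs)"

lemma symp_und_adj_without: "symp (und_adj_without A x y)"
  unfolding symp_def und_adj_without_def und_adj_def by (auto simp: insert_commute)

lemma und_adj_without_commute: "und_adj_without A y x = und_adj_without A x y"
  unfolding und_adj_without_def by (auto simp: insert_commute)

lemma traverses_commute: "traverses xs y x \<longleftrightarrow> traverses xs x y"
  unfolding traverses_def by blast

lemma traverses_rev: "traverses (rev xs) x y \<longleftrightarrow> traverses xs x y"
proof -
  have "traverses xs x y" if "traverses (rev xs) x y" for xs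
  proof -
    from that obtain ys zs where "rev xs = ys @ x # y # zs \<or> rev xs = ys @ y # x # zs"
      unfolding traverses_def by blast
    then have "xs = rev zs @ y # x # rev ys \<or> xs = rev zs @ x # y # rev ys"
      by (metis append.assoc append_Cons append_Nil rev.simps(2) rev_append rev_rev_ident)
    then show ?thesis unfolding traverses_def by blast
  qed
  from this[of xs] this[of "rev xs"] show ?thesis by auto
qed

lemma traverses_set: "traverses xs x y \<Longrightarrow> x \<in> set xs \<and> y \<in> set xs"
  unfolding traverses_def by auto

lemma successively_und_adj_without:
  "successively (und_adj A) xs \<Longrightarrow> x \<notin> set xs \<or> y \<notin> set xs
    \<Longrightarrow> successively (und_adj_without A x y) xs"
  by (erule successively_mono) (auto simp: und_adj_without_def doubleton_eq_iff)

lemma successively_und_adj_without_if_not_traverses: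
  assumes "successively (und_adj A) xs" "\<not> traverses xs x y"
  shows "successively (und_adj_without A x y) xs"
proof (rule ccontr)
  assume "\<not> ?thesis"
  then obtain ys u v zs where xs: "xs = ys @ u # v # zs" and "\<not> und_adj_without A x y u v"
    by (blast dest: not_successively_split)
  moreover have "und_adj A u v"
    using assms(1) unfolding xs by (simp add: successively_append_iff)
  ultimately have "{u, v} = {x, y}" unfolding und_adj_without_def by blast
  then show False
    using assms(2) unfolding xs traverses_def by (auto simp: doubleton_eq_iff)
qed

lemma oriented_tree_digraph: "oriented_tree V A \<Longrightarrow> digraph V A"
  unfolding oriented_tree_def by blast

lemma oriented_tree_asym: "oriented_tree V A \<Longrightarrow> (u, v) \<in> A \<Longrightarrow> (v, u) \<notin> A"
  unfolding oriented_tree_def by blast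

lemma oriented_tree_und_adj_neq: "oriented_tree V A \<Longrightarrow> und_adj A u v \<Longrightarrow> u \<noteq> v"
  unfolding oriented_tree_def und_adj_def by blast

lemma successively_und_adj_subset:
  "digraph V A \<Longrightarrow> successively (und_adj A) xs \<Longrightarrow> 2 \<le> length xs \<Longrightarrow> set xs \<subseteq> V"
  by (induction xs rule: induct_list012) (fastforce simp: digraph_def und_adj_def Suc_le_eq)+

lemma oriented_tree_bridge:
  assumes T: "oriented_tree V A" and xy: "und_adj A x y"
  shows "\<not> (und_adj_without A x y)\<^sup>*\<^sup>* x y"
proof
  assume "(und_adj_without A x y)\<^sup>*\<^sup>* x y"
  then obtain p where path: "rtrancl_path (und_adj_without A x y) x p y"
    and dist: "distinct (x # p)"
    by (metis rtranclp_eq_rtrancl_path rtrancl_path_distinct)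
  have walk: "successively (und_adj_without A x y) (x # p)" and last: "last (x # p) = y"
    using successively_if_rtrancl_path[OF path] by auto
  have "x \<noteq> y" using oriented_tree_und_adj_neq[OF T xy] .
  have "3 \<le> length (x # p)"
  proof (cases p rule: rev_cases)
    case Nil then show ?thesis using last \<open>x \<noteq> y\<close> by simp
  next
    case (snoc q y')
    then have "y' = y" using last by simp
    then show ?thesis using walk snoc by (cases q) (auto simp: und_adj_without_def)
  qed
  moreover have "successively (und_adj A) (x # p)"
    using walk by (rule successively_mono) (simp add: und_adj_without_def)
  moreover have "und_adj A (last (x # p)) (hd (x # p))"
    using xy last by (auto simp: und_adj_def)
  ultimately have "is_cycle (und_adj A) V (x # p)"
    using dist oriented_tree_digraph[OF T] by (intro is_cycle_intro successively_und_adj_subset) auto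
  then show False using T unfolding oriented_tree_def by blast
qed

lemma und_adj_without_rtranclp_sym:
  "(und_adj_without A x y)\<^sup>*\<^sup>* a b \<Longrightarrow> (und_adj_without A x y)\<^sup>*\<^sup>* b a"
  using symp_rtranclp[OF symp_und_adj_without] by (rule sympD)

lemma oriented_tree_path_edge_needed:
  assumes T: "oriented_tree V A" and dist: "distinct P" and walk: "successively (und_adj A) P"
    and "traverses P x y"
  shows "\<not> (und_adj_without A x y)\<^sup>*\<^sup>* (hd P) (last P)"
proof
  obtain ys u v zs where P: "P = ys @ u # v # zs"
    and uv: "und_adj_without A u v = und_adj_without A x y"
    using \<open>traverses P x y\<close> und_adj_without_commute unfolding traverses_def by metis
  let ?R = "und_adj_without A u v"
  assume "(und_adj_without A x y)\<^sup>*\<^sup>* (hd P) (last P)"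
  then have reach: "?R\<^sup>*\<^sup>* (hd P) (last P)" unfolding uv .
  have P': "P = (ys @ [u]) @ (v # zs)" using P by simp
  have "successively (und_adj A) (ys @ [u])" "successively (und_adj A) (v # zs)"
    using walk unfolding P' successively_append_iff by blast+
  moreover have "v \<notin> set (ys @ [u])" "u \<notin> set (v # zs)" using dist unfolding P' by auto
  ultimately have "successively ?R (ys @ [u])" "successively ?R (v # zs)"
    by (blast intro: successively_und_adj_without)+
  then have "?R\<^sup>*\<^sup>* (hd (ys @ [u])) (last (ys @ [u]))" "?R\<^sup>*\<^sup>* (hd (v # zs)) (last (v # zs))"
    by (blast intro: successively_rtranclp)+
  moreover have "hd P = hd (ys @ [u])" "last P = last (v # zs)" unfolding P by (cases ys, simp_all)
  ultimately have "?R\<^sup>*\<^sup>* (hd P) u" "?R\<^sup>*\<^sup>* v (last P)" by simp_all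
  then have "?R\<^sup>*\<^sup>* u v"
    using reach by (meson und_adj_without_rtranclp_sym rtranclp_trans)
  moreover have "und_adj A u v" using walk unfolding P by (simp add: successively_append_iff)
  ultimately show False using oriented_tree_bridge[OF T] by blast
qed

text \<open>In an oriented tree a directed path into \<open>m\<close> and a directed path out of \<open>m\<close> meet only
  in \<open>m\<close>: a common vertex \<open>z\<close> would give a second connection between \<open>m\<close> and its
  predecessor \<open>w\<close>, because the out-path cannot leave \<open>m\<close> towards \<open>w\<close>.\<close>

lemma oriented_tree_in_out_disjoint:
  assumes T: "oriented_tree V A"
    and into: "distinct (xs @ [m])" "successively (\<lambda>u v. (u, v) \<in> A) (xs @ [m])"
    and out: "distinct (m # ys)" "successively (\<lambda>u v. (u, v) \<in> A) (m # ys)"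
  shows "set xs \<inter> set ys = {}"
proof (rule ccontr)
  assume "set xs \<inter> set ys \<noteq> {}"
  then obtain z xs1 xs2 ys1 ys2 where xs: "xs = xs1 @ z # xs2" and ys: "ys = ys1 @ z # ys2"
    by (meson disjoint_iff split_list)
  obtain ws w where zw: "z # xs2 = ws @ [w]" by (metis list.distinct(1) rev_exhaust)
  let ?R = "und_adj_without A w m"
  have into_split: "xs @ [m] = xs1 @ ws @ [w, m]" using xs zw by simp
  have "\<not> ?R\<^sup>*\<^sup>* (hd (ws @ [w, m])) (last (ws @ [w, m]))"
  proof (rule oriented_tree_path_edge_needed[OF T])
    show "distinct (ws @ [w, m])" using into(1) unfolding into_split by simp
    show "successively (und_adj A) (ws @ [w, m])"
      using into(2) unfolding into_split
      by (auto simp: successively_append_iff und_adj_def elim: successively_mono)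
  qed (auto simp: traverses_def)
  moreover have "hd (ws @ [w, m]) = z" using zw by (cases ws) auto
  ultimately have no_reach: "\<not> ?R\<^sup>*\<^sup>* z m" by simp
  have wm: "(w, m) \<in> A" using into(2) unfolding into_split by (simp add: successively_append_iff)
  have "m # ys = (m # ys1 @ [z]) @ ys2" using ys by simp
  then have out_prefix:
    "distinct (m # ys1 @ [z])" "successively (\<lambda>u v. (u, v) \<in> A) (m # ys1 @ [z])"
    using out by (metis distinct_append successively_append_iff)+
  let ?h = "hd (ys1 @ [z])"
  have "(m, ?h) \<in> A" using out_prefix(2) by (simp add: successively_Cons)
  then have "?R m ?h"
    using oriented_tree_asym[OF T wm] oriented_tree_und_adj_neq[OF T]
    by (auto simp: und_adj_without_def und_adj_def doubleton_eq_iff)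
  moreover have "successively ?R (ys1 @ [z])"
    using out_prefix by (intro successively_und_adj_without)
      (auto simp: successively_Cons und_adj_def elim: successively_mono)
  ultimately have "successively ?R (m # ys1 @ [z])" by (simp add: successively_Cons)
  then have "?R\<^sup>*\<^sup>* (hd (m # ys1 @ [z])) (last (m # ys1 @ [z]))" by (blast intro: successively_rtranclp)
  then have "?R\<^sup>*\<^sup>* m z" by simp
  then show False using no_reach und_adj_without_rtranclp_sym by metis
qed

lemma not_traverses_after_divergence:
  assumes "distinct (pre @ m # a # r1)" "distinct (pre @ m # b # r0)" "a \<noteq> b"
  shows "\<not> traverses (pre @ m # b # r0) m a"
proof
  assume "traverses (pre @ m # b # r0) m a"
  then obtain ys zs where "pre @ m # b # r0 = ys @ m # a # zs \<or> pre @ m # b # r0 = ys @ a # m # zs"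
    unfolding traverses_def by blast
  then show False
  proof
    assume "pre @ m # b # r0 = ys @ m # a # zs"
    from distinct_split_unique[OF assms(2) this] have "b = a" by simp
    with assms(3) show False by simp
  next
    assume "pre @ m # b # r0 = ys @ a # m # zs"
    then have "pre @ m # b # r0 = (ys @ [a]) @ m # zs" by simp
    from distinct_split_unique[OF assms(2) this] have "pre = ys @ [a]" by simp
    with assms(1) show False by simp
  qed
qed

lemma dipath_through_arcs:
  assumes "successively (\<lambda>u v. (u, v) \<in> A) Q" "P = Q \<or> P = rev Q" "P = ys @ z # m # a # zs"
  shows "(z, m) \<in> A \<and> (m, a) \<in> A \<or> (m, z) \<in> A \<and> (a, m) \<in> A"
proof -
  have "successively (\<lambda>u v. (u, v) \<in> A) P \<or> successively (\<lambda>u v. (v, u) \<in> A) P"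
    using assms(1,2) by auto
  moreover have "successively R (z # m # a # zs)" if "successively R P" for R
    using that unfolding assms(3) successively_append_iff by blast
  ultimately show ?thesis by fastforce
qed

lemma dipath_traverses_arc:
  assumes "\<And>u v. (u, v) \<in> A \<Longrightarrow> (v, u) \<notin> A" "successively (\<lambda>u v. (u, v) \<in> A) Q"
    "traverses Q x y" "(x, y) \<in> A"
  shows "\<exists>ys zs. Q = ys @ x # y # zs"
proof -
  obtain ys zs where "Q = ys @ x # y # zs \<or> Q = ys @ y # x # zs"
    using assms(3) unfolding traverses_def by blast
  moreover have "(y, x) \<in> A" if "Q = ys @ y # x # zs"
    using assms(2) unfolding that successively_append_iff by simp
  ultimately show ?thesis using assms(1,4) by blast
qed

lemma distinct_dipath_traverses_eq:
  assumes asym: "\<And>u v. (u, v) \<in> A \<Longrightarrow> (v, u) \<notin> A"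
    and dipath: "distinct Q" "successively (\<lambda>u v. (u, v) \<in> A) Q"
    and "traverses Q m a" "traverses Q m b"
    and "(m, a) \<in> A \<and> (m, b) \<in> A \<or> (a, m) \<in> A \<and> (b, m) \<in> A"
  shows "a = b"
  using assms(6)
proof
  assume "(m, a) \<in> A \<and> (m, b) \<in> A"
  then obtain ys zs ys' zs' where "Q = ys @ m # a # zs" "Q = ys' @ m # b # zs'"
    using dipath_traverses_arc[OF asym dipath(2)] assms(4,5) by meson
  then have "a # zs = b # zs'" using distinct_split_unique dipath(1) by metis
  then show "a = b" by simp
next
  assume "(a, m) \<in> A \<and> (b, m) \<in> A"
  then obtain ys zs ys' zs' where "Q = ys @ a # m # zs" "Q = ys' @ b # m # zs'"
    using dipath_traverses_arc[OF asym dipath(2)] assms(4,5) traverses_commute by meson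
  then have "Q = (ys @ [a]) @ m # zs" "Q = (ys' @ [b]) @ m # zs'" by simp_all
  then have "ys @ [a] = ys' @ [b]" using distinct_split_unique dipath(1) by metis
  then show "a = b" by simp
qed

section \<open>Temporal paths in oriented trees\<close>

lemma temporal_path_Nil [simp]: "\<not> temporal_path A lam [] ts"
  unfolding temporal_path_def by simp

lemma temporal_path_Cons_Nil [simp]: "temporal_path A lam (u # vs) [] \<longleftrightarrow> vs = []"
  unfolding temporal_path_def by auto

lemma temporal_path_Cons_Cons:
  "temporal_path A lam (u # vs) (t # ts) \<longleftrightarrow>
     vs \<noteq> [] \<and> (u, hd vs) \<in> A \<and> t \<in> lam (u, hd vs) \<and> u \<notin> set vs \<and> (\<forall>s \<in> set ts. t < s) \<and>
     temporal_path A lam vs ts"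
  unfolding temporal_path_def by (cases vs) (auto simp: All_less_Suc2)

lemma temporal_path_length: "temporal_path A lam vs ts \<Longrightarrow> length vs = Suc (length ts)"
  unfolding temporal_path_def by simp

lemma temporal_path_dipath:
  "temporal_path A lam vs ts \<Longrightarrow> distinct vs \<and> successively (\<lambda>u v. (u, v) \<in> A) vs"
  unfolding temporal_path_def successively_conv_nth by auto

lemma temporal_path_append_iff:
  "length ts1 = length xs \<Longrightarrow>
   temporal_path A lam (xs @ m # ys) (ts1 @ ts2) \<longleftrightarrow>
     temporal_path A lam (xs @ [m]) ts1 \<and> temporal_path A lam (m # ys) ts2 \<and>
     set xs \<inter> set ys = {} \<and> (\<forall>a \<in> set ts1. \<forall>b \<in> set ts2. a < b)"
proof (induction xs arbitrary: ts1)
  case Nil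
  then show ?case by simp
next
  case (Cons u xs)
  then obtain t ts1' where "ts1 = t # ts1'" "length ts1' = length xs" by (cases ts1) auto
  with Cons.IH show ?case by (auto simp: temporal_path_Cons_Cons hd_append)
qed

lemma temporal_path_splitE:
  assumes "temporal_path A lam (xs @ m # ys) ts"
  obtains ts1 ts2 where "ts = ts1 @ ts2"
    "temporal_path A lam (xs @ [m]) ts1" "temporal_path A lam (m # ys) ts2"
    "\<forall>a \<in> set ts1. \<forall>b \<in> set ts2. a < b"
proof -
  have "length (take (length xs) ts) = length xs" using temporal_path_length[OF assms] by simp
  then show ?thesis using that assms temporal_path_append_iff by (metis append_take_drop_id)
qed

lemma temporally_reaches_via:
  assumes "temporal_path A lam vs ts" "z \<in> set vs"
  shows "temporally_reaches A lam (hd vs) z \<and> temporally_reaches A lam z (last vs)"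
proof -
  obtain xs ys where vs: "vs = xs @ z # ys" using split_list assms(2) by metis
  from assms(1) obtain ts1 ts2
    where "temporal_path A lam (xs @ [z]) ts1" "temporal_path A lam (z # ys) ts2"
    unfolding vs by (rule temporal_path_splitE)
  moreover have "hd (xs @ [z]) = hd vs" "last (z # ys) = last vs" unfolding vs by (cases xs; simp)+
  ultimately show ?thesis unfolding temporally_reaches_def by (metis last_snoc list.sel(1))
qed

lemma oriented_tree_temporal_path_join:
  assumes T: "oriented_tree V A"
    and into: "temporal_path A lam (xs @ [m]) ts1" and out: "temporal_path A lam (m # ys) ts2"
    and "\<forall>a \<in> set ts1. \<forall>b \<in> set ts2. a < b"
  shows "temporal_path A lam (xs @ m # ys) (ts1 @ ts2)"
proof -
  have "distinct (xs @ [m])" "successively (\<lambda>u v. (u, v) \<in> A) (xs @ [m])"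
    "distinct (m # ys)" "successively (\<lambda>u v. (u, v) \<in> A) (m # ys)"
    using temporal_path_dipath[OF into] temporal_path_dipath[OF out] by auto
  then have "set xs \<inter> set ys = {}" by (rule oriented_tree_in_out_disjoint[OF T])
  moreover have "length ts1 = length xs" using temporal_path_length[OF into] by simp
  ultimately show ?thesis using into out assms(4) by (simp add: temporal_path_append_iff)
qed

text \<open>If the arrival at \<open>m\<close> along one path precedes the departure from \<open>m\<close> along the
  other, the two halves can be joined. One of the two combinations always works: otherwise
  each arrival would come after the departure on the other path, hence after its own.\<close>

lemma oriented_tree_temporal_paths_cross:
  assumes T: "oriented_tree V A"
    and P1: "temporal_path A lam vs1 ts1" and P2: "temporal_path A lam vs2 ts2"
    and "m \<in> set vs1" "m \<in> set vs2"
  shows "temporally_reaches A lam (hd vs1) (last vs2) \<or> temporally_reaches A lam (hd vs2) (last vs1)"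
proof -
  have reach: "temporally_reaches A lam (hd (xs @ m # ys)) (last (xs' @ m # ys'))"
    if "temporal_path A lam (xs @ [m]) s" "temporal_path A lam (m # ys') s'"
      "\<forall>a \<in> set s. \<forall>b \<in> set s'. a < b"
    for xs ys xs' ys' s s'
  proof -
    have "temporal_path A lam (xs @ m # ys') (s @ s')"
      using oriented_tree_temporal_path_join[OF T that] .
    moreover have "hd (xs @ m # ys') = hd (xs @ m # ys)" by (cases xs) auto
    ultimately show ?thesis unfolding temporally_reaches_def by fastforce
  qed
  obtain xs1 ys1 xs2 ys2 where vs1: "vs1 = xs1 @ m # ys1" and vs2: "vs2 = xs2 @ m # ys2"
    using assms(4,5) split_list by metis
  obtain s1 s1' where in1: "temporal_path A lam (xs1 @ [m]) s1"
    and out1: "temporal_path A lam (m # ys1) s1'" and ord1: "\<forall>a \<in> set s1. \<forall>b \<in> set s1'. a < b"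
    using P1 unfolding vs1 by (rule temporal_path_splitE)
  obtain s2 s2' where in2: "temporal_path A lam (xs2 @ [m]) s2"
    and out2: "temporal_path A lam (m # ys2) s2'" and ord2: "\<forall>a \<in> set s2. \<forall>b \<in> set s2'. a < b"
    using P2 unfolding vs2 by (rule temporal_path_splitE)
  have "(\<forall>a \<in> set s1. \<forall>b \<in> set s2'. a < b) \<or> (\<forall>a \<in> set s2. \<forall>b \<in> set s1'. a < b)"
  proof (rule disjCI)
    assume "\<not> (\<forall>a \<in> set s2. \<forall>b \<in> set s1'. a < b)"
    then obtain a b where ab: "a \<in> set s2" "b \<in> set s1'" "b \<le> a" by (auto simp: not_less)
    show "\<forall>a' \<in> set s1. \<forall>b' \<in> set s2'. a' < b'"
    proof (intro ballI)
      fix a' b' assume "a' \<in> set s1" "b' \<in> set s2'"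
      then have "a' < b" "a < b'" using ab ord1 ord2 by blast+
      then show "a' < b'" using \<open>b \<le> a\<close> by linarith
    qed
  qed
  then show ?thesis
    using reach[OF in1 out2] reach[OF in2 out1] unfolding vs1 vs2 by blast
qed

section \<open>A long hole yields a contradiction\<close>

definition cyclic_close :: "nat \<Rightarrow> nat \<Rightarrow> nat \<Rightarrow> bool" where
  "cyclic_close k x y \<longleftrightarrow> x = y \<or> y = Suc x mod k \<or> x = Suc y mod k"

definition cyclic_edges_touch :: "nat \<Rightarrow> nat \<Rightarrow> nat \<Rightarrow> bool" where
  "cyclic_edges_touch k u w \<longleftrightarrow> (\<exists>x \<in> {u, Suc u mod k}. \<exists>y \<in> {w, Suc w mod k}. cyclic_close k x y)"

lemma cyclic_close_sym: "cyclic_close k x y \<longleftrightarrow> cyclic_close k y x"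
  unfolding cyclic_close_def by auto

lemma cyclic_edges_touch_sym: "cyclic_edges_touch k u w \<longleftrightarrow> cyclic_edges_touch k w u"
  unfolding cyclic_edges_touch_def using cyclic_close_sym by blast

lemma cyclic_close_both_ends:
  assumes "4 \<le> k" "x < k" "j < k" "cyclic_close k x j" "cyclic_close k x (Suc j mod k)"
  shows "x = j \<or> x = Suc j mod k"
  using assms unfolding cyclic_close_def by (auto simp: mod_Suc split: if_splits)

lemma cyclic_edges_touching_first_two:
  assumes "6 \<le> k" "2 \<le> j" "j < k" "cyclic_edges_touch k 0 j" "cyclic_edges_touch k 1 j"
  shows "j = 2 \<or> j = k - 1"
  using assms unfolding cyclic_edges_touch_def cyclic_close_def by (auto simp: mod_Suc split: if_splits)

lemma cyclic_edges_apart: "6 \<le> k \<Longrightarrow> \<not> cyclic_edges_touch k 2 (k - 1)"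
  unfolding cyclic_edges_touch_def cyclic_close_def by (auto simp: mod_Suc split: if_splits)

locale temporal_tree_long_hole =
  fixes V :: "'a set" and A :: "('a \<times> 'a) set" and lam :: "'a \<times> 'a \<Rightarrow> nat set"
    and cs :: "'a list" and Q :: "nat \<Rightarrow> 'a list"
  assumes tree: "oriented_tree V A"
    and hole: "is_induced_cycle (conn_graph V A lam) V cs"
    and long: "6 \<le> length cs"
    and Q_path: "j < length cs \<Longrightarrow> \<exists>ts. temporal_path A lam (Q j) ts"
    and Q_ends: "j < length cs \<Longrightarrow> {hd (Q j), last (Q j)} = {cs ! j, cs ! (Suc j mod length cs)}"
begin

abbreviation k where "k \<equiv> length cs"

lemma k_pos: "0 < k"
  using long by linarith

lemma Q_dipath:
  "j < k \<Longrightarrow> Q j \<noteq> [] \<and> distinct (Q j) \<and> successively (\<lambda>u v. (u, v) \<in> A) (Q j)"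
  using Q_path temporal_path_dipath by (metis temporal_path_Nil)

lemma Q_walk: "j < k \<Longrightarrow> successively (und_adj A) (Q j)"
  using Q_dipath by (metis (no_types, lifting) successively_mono und_adj_def)

lemma Q_ends_cases:
  "j < k \<Longrightarrow> hd (Q j) = cs ! j \<and> last (Q j) = cs ! (Suc j mod k) \<or>
             hd (Q j) = cs ! (Suc j mod k) \<and> last (Q j) = cs ! j"
  using Q_ends by (simp add: doubleton_eq_iff)

lemma hole_adj:
  "i < k \<Longrightarrow> j < k \<Longrightarrow> conn_graph V A lam (cs ! i) (cs ! j) \<longleftrightarrow> j = Suc i mod k \<or> i = Suc j mod k"
  using hole unfolding is_induced_cycle_def by simp

lemma temporally_reaches_cyclic_close:
  assumes "i < k" "j < k" "temporally_reaches A lam (cs ! i) (cs ! j)"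
  shows "cyclic_close k i j"
proof (cases "i = j")
  case False
  then have "cs ! i \<noteq> cs ! j" using assms(1,2) hole by (simp add: is_induced_cycle_def nth_eq_iff_index_eq)
  moreover have "cs ! i \<in> V" "cs ! j \<in> V" using assms(1,2) hole by (auto simp: is_induced_cycle_def)
  ultimately have "conn_graph V A lam (cs ! i) (cs ! j)" using assms(3) by (simp add: conn_graph_def)
  then show ?thesis using hole_adj assms(1,2) by (simp add: cyclic_close_def)
qed (simp add: cyclic_close_def)

lemma cycle_vertex_on_Q:
  assumes "x < k" "j < k" "cs ! x \<in> set (Q j)"
  shows "x = j \<or> x = Suc j mod k"
proof -
  obtain ts where "temporal_path A lam (Q j) ts" using Q_path assms(2) by blast
  then have "temporally_reaches A lam (hd (Q j)) (cs ! x)" "temporally_reaches A lam (cs ! x) (last (Q j))"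
    using temporally_reaches_via[OF _ assms(3)] by auto
  moreover have "Suc j mod k < k" using k_pos by simp
  ultimately have "cyclic_close k x j" "cyclic_close k x (Suc j mod k)"
    using Q_ends_cases[OF assms(2)] temporally_reaches_cyclic_close assms(1,2) cyclic_close_sym by metis+
  then show ?thesis using cyclic_close_both_ends long assms(1,2) by simp
qed

lemma common_vertex_edges_touch:
  assumes "u < k" "w < k" "m \<in> set (Q u)" "m \<in> set (Q w)"
  shows "cyclic_edges_touch k u w"
proof -
  obtain tu tw where "temporal_path A lam (Q u) tu" "temporal_path A lam (Q w) tw"
    using Q_path assms(1,2) by blast
  then have "temporally_reaches A lam (hd (Q u)) (last (Q w)) \<or>
      temporally_reaches A lam (hd (Q w)) (last (Q u))"
    using oriented_tree_temporal_paths_cross[OF tree] assms(3,4) by blast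
  moreover have "Suc u mod k < k" "Suc w mod k < k" using k_pos by simp_all
  ultimately show ?thesis
    using Q_ends_cases[OF assms(1)] Q_ends_cases[OF assms(2)] temporally_reaches_cyclic_close
      assms(1,2) cyclic_close_sym
    unfolding cyclic_edges_touch_def by (smt (verit) insert_iff)
qed

lemma Q_connects:
  assumes "symp R" "j < k" "successively R (Q j)"
  shows "R\<^sup>*\<^sup>* (cs ! j) (cs ! (Suc j mod k))"
proof -
  have "R\<^sup>*\<^sup>* (hd (Q j)) (last (Q j))" using successively_rtranclp assms(2,3) Q_dipath by blast
  then show ?thesis using Q_ends_cases[OF assms(2)] sympD[OF symp_rtranclp[OF assms(1)]] by auto
qed

lemma walk_along:
  assumes "symp R" "l \<le> n" "\<And>j. l \<le> j \<Longrightarrow> j < n \<Longrightarrow> successively R (Q (j mod k))"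
  shows "R\<^sup>*\<^sup>* (cs ! (l mod k)) (cs ! (n mod k))"
  using assms(2,3)
proof (induction n)
  case (Suc n)
  show ?case
  proof (cases "l = Suc n")
    case False
    then have "R\<^sup>*\<^sup>* (cs ! (l mod k)) (cs ! (n mod k))" using Suc by simp
    moreover have "R\<^sup>*\<^sup>* (cs ! (n mod k)) (cs ! (Suc n mod k))"
      using Q_connects[OF assms(1), of "n mod k"] Suc.prems False k_pos by (simp add: mod_Suc_eq)
    ultimately show ?thesis by (rule rtranclp_trans)
  qed simp
qed simp

lemma around_cycle:
  assumes "symp R" "i < k" "\<And>j. j < k \<Longrightarrow> j \<noteq> i \<Longrightarrow> successively R (Q j)"
  shows "R\<^sup>*\<^sup>* (cs ! i) (cs ! (Suc i mod k))"
proof -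
  have "R\<^sup>*\<^sup>* (cs ! (Suc i mod k)) (cs ! ((k + i) mod k))"
  proof (rule walk_along[OF assms(1)])
    fix j assume "Suc i \<le> j" "j < k + i"
    then have "j mod k \<noteq> i" using assms(2) by (cases "j < k") (auto simp: le_mod_geq)
    then show "successively R (Q (j mod k))" using assms(3) k_pos by simp
  qed (use k_pos in linarith)
  then show ?thesis using assms(2) sympD[OF symp_rtranclp[OF assms(1)]] by simp
qed

text \<open>The paths \<open>Q j\<close> form a closed walk and tree edges are bridges.\<close>

lemma traversed_edge_reused:
  assumes "i < k" "traverses (Q i) x y"
  shows "\<exists>j<k. j \<noteq> i \<and> traverses (Q j) x y"
proof (rule ccontr)
  let ?R = "und_adj_without A x y"
  assume not_reused: "\<not> ?thesis"
  have "successively ?R (Q j)" if "j < k" "j \<noteq> i" for j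
  proof (rule successively_und_adj_without_if_not_traverses)
    show "successively (und_adj A) (Q j)" using Q_walk that(1) .
    show "\<not> traverses (Q j) x y" using not_reused that by blast
  qed
  then have "?R\<^sup>*\<^sup>* (cs ! i) (cs ! (Suc i mod k))"
    by (rule around_cycle[OF symp_und_adj_without assms(1)])
  then have "?R\<^sup>*\<^sup>* (hd (Q i)) (last (Q i))"
    using Q_ends_cases[OF assms(1)] und_adj_without_rtranclp_sym by (elim disjE) simp_all
  moreover have "\<not> ?R\<^sup>*\<^sup>* (hd (Q i)) (last (Q i))"
    using oriented_tree_path_edge_needed[OF tree _ Q_walk[OF assms(1)] assms(2)] Q_dipath[OF assms(1)]
    by blast
  ultimately show False by contradiction
qed

text \<open>\<open>m\<close> is the vertex where the tree paths from \<open>cs ! 1\<close> to \<open>cs ! 2\<close> and to \<open>cs ! 0\<close>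
  diverge, continuing to \<open>a\<close> and \<open>b\<close>. If \<open>m\<close> has a predecessor \<open>z\<close> on both paths,
  the arcs \<open>zm\<close> agree, so \<open>ma\<close> and \<open>mb\<close> point the same way at \<open>m\<close>.\<close>

lemma branch_vertex:
  obtains m a b where "a \<noteq> b" "traverses (Q 1) m a" "\<not> traverses (Q 0) m a"
    "traverses (Q 0) m b" "\<not> traverses (Q 1) m b"
    "m \<noteq> cs ! 1 \<Longrightarrow> (m, a) \<in> A \<and> (m, b) \<in> A \<or> (a, m) \<in> A \<and> (b, m) \<in> A"
proof -
  have k: "0 < k" "1 < k" "2 < k" "Suc 0 mod k = 1" "Suc 1 mod k = 2" using long by auto
  obtain P1 where P1: "P1 = Q 1 \<or> P1 = rev (Q 1)" "hd P1 = cs ! 1" "last P1 = cs ! 2"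
    using Q_ends_cases[of 1] Q_dipath[of 1] k by (metis hd_rev last_rev)
  obtain P0 where P0: "P0 = Q 0 \<or> P0 = rev (Q 0)" "hd P0 = cs ! 1" "last P0 = cs ! 0"
    using Q_ends_cases[of 0] Q_dipath[of 0] k by (metis hd_rev last_rev)
  have dist: "distinct P1" "distinct P0" and ne: "P1 \<noteq> []" "P0 \<noteq> []"
    using P1(1) P0(1) Q_dipath[of 1] Q_dipath[of 0] k by auto
  have "cs ! 2 \<notin> set P0" using cycle_vertex_on_Q[of 2 0] P0(1) k by auto
  moreover have "cs ! 0 \<notin> set P1" using cycle_vertex_on_Q[of 0 1] P1(1) k by auto
  ultimately have "P1 \<parallel> P0"
    using P1(3) P0(3) ne by (metis last_in_set parallelI set_mono_prefix subsetD)
  then obtain pre a r1 b r0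
    where ab: "a \<noteq> b" and P1': "P1 = pre @ a # r1" and P0': "P0 = pre @ b # r0"
    by (blast dest: parallel_decomp)
  have "pre \<noteq> []" using ab P1' P0' P1(2) P0(2) by auto
  then obtain pre' m where "pre = pre' @ [m]" by (metis rev_exhaust)
  then have P1m: "P1 = pre' @ m # a # r1" and P0m: "P0 = pre' @ m # b # r0" using P1' P0' by simp_all
  have "traverses P1 m a" "traverses P0 m b" unfolding P1m P0m traverses_def by blast+
  then have used: "traverses (Q 1) m a" "traverses (Q 0) m b"
    using P1(1) P0(1) by (auto simp: traverses_rev)
  have "\<not> traverses P0 m a" "\<not> traverses P1 m b"
    using not_traverses_after_divergence dist ab unfolding P1m P0m by metis+
  then have unused: "\<not> traverses (Q 0) m a" "\<not> traverses (Q 1) m b"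
    using P1(1) P0(1) by (auto simp: traverses_rev)
  have orient: "(m, a) \<in> A \<and> (m, b) \<in> A \<or> (a, m) \<in> A \<and> (b, m) \<in> A" if "m \<noteq> cs ! 1"
  proof -
    have "pre' \<noteq> []" using that P1(2) P1m by auto
    then obtain pre'' z where "pre' = pre'' @ [z]" by (metis rev_exhaust)
    then have "(z, m) \<in> A \<and> (m, a) \<in> A \<or> (m, z) \<in> A \<and> (a, m) \<in> A"
      "(z, m) \<in> A \<and> (m, b) \<in> A \<or> (m, z) \<in> A \<and> (b, m) \<in> A"
      using dipath_through_arcs[OF _ P1(1)] dipath_through_arcs[OF _ P0(1)] Q_dipath[of 1]
        Q_dipath[of 0] k P1m P0m by auto
    then show ?thesis using oriented_tree_asym[OF tree] by blast
  qed
  show thesis by (rule that[OF ab used(1) unused(1) used(2) unused(2) orient])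
qed

theorem no_long_hole: False
proof -
  obtain m a b where ab: "a \<noteq> b" and a1: "traverses (Q 1) m a" and a0: "\<not> traverses (Q 0) m a"
    and b0: "traverses (Q 0) m b" and b1: "\<not> traverses (Q 1) m b"
    and arcs: "m \<noteq> cs ! 1 \<Longrightarrow> (m, a) \<in> A \<and> (m, b) \<in> A \<or> (a, m) \<in> A \<and> (b, m) \<in> A"
    using branch_vertex by blast
  have k: "0 < k" "1 < k" using long by auto
  obtain j where j: "j < k" "2 \<le> j" "traverses (Q j) m a"
    using traversed_edge_reused[OF k(2) a1] a0 by (metis One_nat_def less_2_cases not_less)
  obtain j' where j': "j' < k" "2 \<le> j'" "traverses (Q j') m b"
    using traversed_edge_reused[OF k(1) b0] b1 by (metis One_nat_def less_2_cases not_less)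
  have on: "m \<in> set (Q 0)" "m \<in> set (Q 1)" "m \<in> set (Q j)" "m \<in> set (Q j')"
    using a1 b0 j(3) j'(3) traverses_set by metis+
  have "m \<noteq> cs ! 1"
    using cycle_vertex_on_Q[OF k(2) j(1)] on(3) j(1,2) by (auto simp: mod_Suc split: if_splits)
  then have "j \<noteq> j'"
    using distinct_dipath_traverses_eq[OF oriented_tree_asym[OF tree]] Q_dipath j(1,3) j'(3) arcs ab
    by metis
  moreover have "j = 2 \<or> j = k - 1" "j' = 2 \<or> j' = k - 1"
    using cyclic_edges_touching_first_two[OF long] common_vertex_edges_touch k on j j' by simp_all
  ultimately show False
    using cyclic_edges_apart[OF long] cyclic_edges_touch_sym common_vertex_edges_touch on j j' by metis
qed

end

lemma induced_cycle_step:
  assumes "is_induced_cycle E V cs" "j < length cs"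
  shows "E (cs ! j) (cs ! (Suc j mod length cs))"
proof -
  have "0 < length cs" using assms(2) by linarith
  then have "Suc j mod length cs < length cs" by simp
  moreover have "\<forall>i < length cs. \<forall>j < length cs.
      E (cs ! i) (cs ! j) \<longleftrightarrow> j = (i + 1) mod length cs \<or> i = (j + 1) mod length cs"
    using assms(1) unfolding is_induced_cycle_def by (elim conjE)
  ultimately show ?thesis using assms(2) by simp
qed

lemma conn_graph_temporal_path:
  "conn_graph V A lam u w \<Longrightarrow> \<exists>vs ts. temporal_path A lam vs ts \<and> {hd vs, last vs} = {u, w}"
  unfolding conn_graph_def temporally_reaches_def by (auto simp: insert_commute)

theorem mainTheorem11:
  fixes V :: "'a set" and A :: "('a \<times> 'a) set" and tmax :: nat
    and lam :: "'a \<times> 'a \<Rightarrow> nat set"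
  assumes "temporal_digraph V A tmax lam"
    and "oriented_tree V A"
  shows "\<not> has_even_hole (conn_graph V A lam) V"
proof
  assume "has_even_hole (conn_graph V A lam) V"
  then obtain cs where hole: "is_induced_cycle (conn_graph V A lam) V cs" and long: "6 \<le> length cs"
    unfolding has_even_hole_def by blast
  have "\<forall>j. \<exists>vs. j < length cs \<longrightarrow>
      (\<exists>ts. temporal_path A lam vs ts) \<and> {hd vs, last vs} = {cs ! j, cs ! (Suc j mod length cs)}"
    using conn_graph_temporal_path[OF induced_cycle_step[OF hole]] by blast
  from choice[OF this] obtain Q where Q: "\<forall>j. j < length cs \<longrightarrow>
      (\<exists>ts. temporal_path A lam (Q j) ts) \<and> {hd (Q j), last (Q j)} = {cs ! j, cs ! (Suc j mod length cs)}"
    by blast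
  interpret temporal_tree_long_hole V A lam cs Q
    by unfold_locales (use assms(2) hole long Q in blast)+
  show False by (rule no_long_hole)
qed

end
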